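(* Let $G$ be a finite graph and let $(\mathcal{P}_1,R_1),\dots,(\mathcal{P}_m,R_m)$ be a minimal merge sequence for $G$. Let $i\in\{1,\dots,m\}$, let $X,Y\in\mathcal{P}_i$ (possibly $X=Y$), and let $x_1,x_2\in X$ and $y_1,y_2\in Y$ be such that $\{x_1,y_1\}$ and $\{x_2,y_2\}$ are pairs of distinct vertices which are both not in $R_i$. Then for every $j\in\{1,\dots,m\}$, the pairs $\{x_1,y_1\}$ and $\{x_2,y_2\}$ are either both in $R_j$ or both not in $R_j$.
   Context: A merge sequence for a graph $G=(V,E)$ is a sequence $(\mathcal{P}_1,R_1),\dots,(\mathcal{P}_m,R_m)$ where: (1) each $\mathcal{P}_i$ is a partition of $V$, $\mathcal{P}_1$ is the partition into singletons, $\mathcal{P}_m=\{V\}$, and each part of $\mathcal{P}_i$ is a union of parts of $\mathcal{P}_{i-1}$; (2) $R_1\subseteq\dots\subseteq R_m\subseteq\binom{V}{2}$ are sets of unordered pairs of distinct vertices (resolved pairs); (3) for any two (possibly equal) parts $A,B\in\mathcal{P}_i$, the pairs $\{a,b\}$ with $a\in A$, $b\in B$, $a\neq b$, not in $R_i$ are either all edges or all non-edges of $G$. A merge sequence is minimal for $G$ if there is no different sequence $R'_1,\dots,R'_m$ such that $(\mathcal{P}_1,R'_1),\dots,(\mathcal{P}_m,R'_m)$ is a merge sequence for $G$ and $R'_i\subseteq R_i$ for all $i$. *)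

theory Defs
  imports Main "HOL-Library.Disjoint_Sets"
begin

(* A merge sequence of length m is indexed by 1..m: P i is the partition, R i the
   set of resolved pairs at step i. *)

definition graph :: "'a set \<Rightarrow> ('a \<Rightarrow> 'a \<Rightarrow> bool) \<Rightarrow> bool" where
  "graph V E \<longleftrightarrow> (\<forall>u v. E u v \<longrightarrow> u \<in> V \<and> v \<in> V) \<and> (\<forall>u v. E u v \<longrightarrow> E v u) \<and> (\<forall>v. \<not> E v v)"

definition vpairs :: "'a set \<Rightarrow> 'a set set" where
  "vpairs V = {{a, b} | a b. a \<in> V \<and> b \<in> V \<and> a \<noteq> b}"

definition merge_sequence ::
  "'a set \<Rightarrow> ('a \<Rightarrow> 'a \<Rightarrow> bool) \<Rightarrow> nat \<Rightarrow> (nat \<Rightarrow> 'a set set) \<Rightarrow> (nat \<Rightarrow> 'a set set) \<Rightarrow> bool" where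
  "merge_sequence V E m P R \<longleftrightarrow>
     m \<ge> 1 \<and>
     (\<forall>i\<in>{1..m}. partition_on V (P i)) \<and>
     P 1 = (\<lambda>v. {v}) ` V \<and>
     P m = {V} \<and>
     (\<forall>i\<in>{2..m}. \<forall>A\<in>P i. \<exists>S\<subseteq>P (i - 1). A = \<Union>S) \<and>
     (\<forall>i\<in>{1..m}. R i \<subseteq> vpairs V) \<and>
     (\<forall>i\<in>{2..m}. R (i - 1) \<subseteq> R i) \<and>
     (\<forall>i\<in>{1..m}. \<forall>A\<in>P i. \<forall>B\<in>P i.
        (\<forall>a\<in>A. \<forall>b\<in>B. a \<noteq> b \<and> {a, b} \<notin> R i \<longrightarrow> E a b) \<or>
        (\<forall>a\<in>A. \<forall>b\<in>B. a \<noteq> b \<and> {a, b} \<notin> R i \<longrightarrow> \<not> E a b))"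

definition minimal_merge_sequence ::
  "'a set \<Rightarrow> ('a \<Rightarrow> 'a \<Rightarrow> bool) \<Rightarrow> nat \<Rightarrow> (nat \<Rightarrow> 'a set set) \<Rightarrow> (nat \<Rightarrow> 'a set set) \<Rightarrow> bool" where
  "minimal_merge_sequence V E m P R \<longleftrightarrow>
     merge_sequence V E m P R \<and>
     \<not> (\<exists>R'. merge_sequence V E m P R' \<and> (\<forall>i\<in>{1..m}. R' i \<subseteq> R i) \<and>
             (\<exists>i\<in>{1..m}. R' i \<noteq> R i))"

end

theory Submission
  imports Defs
begin

(* Suppose {x1, y1} is resolved at some step j at which {x2, y2} is not. Un-resolve {x1, y1} at
   every step at which {x2, y2} is unresolved. Such a step comes after i, so X and Y lie inside
   parts of the current partition; between these parts, {x1, y1} simply joins the unresolved pair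
   {x2, y2}, which has the same adjacency because both pairs are unresolved between X and Y at
   step i. The result is a merge sequence with strictly smaller resolved sets, contradicting
   minimality. *)

definition homogeneous :: "('a \<Rightarrow> 'a \<Rightarrow> bool) \<Rightarrow> 'a set set \<Rightarrow> 'a set \<Rightarrow> 'a set \<Rightarrow> bool" where
  "homogeneous E Res A B \<longleftrightarrow>
     (\<forall>a\<in>A. \<forall>b\<in>B. a \<noteq> b \<and> {a, b} \<notin> Res \<longrightarrow> E a b) \<or>
     (\<forall>a\<in>A. \<forall>b\<in>B. a \<noteq> b \<and> {a, b} \<notin> Res \<longrightarrow> \<not> E a b)"

lemma homogeneous_unresolved_eq:
  assumes "homogeneous E Res A B"
    and "a \<in> A" "b \<in> B" "a \<noteq> b" "{a, b} \<notin> Res"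
    and "a' \<in> A" "b' \<in> B" "a' \<noteq> b'" "{a', b'} \<notin> Res"
  shows "E a b = E a' b'"
  using assms unfolding homogeneous_def by blast

lemma homogeneous_Diff_singleton:
  assumes "homogeneous E Res A B"
    and "\<And>a b. a \<in> A \<Longrightarrow> b \<in> B \<Longrightarrow> a \<noteq> b \<Longrightarrow> {a, b} = p \<Longrightarrow>
           \<exists>a'\<in>A. \<exists>b'\<in>B. a' \<noteq> b' \<and> {a', b'} \<notin> Res \<and> E a' b' = E a b"
  shows "homogeneous E (Res - {p}) A B"
  using assms unfolding homogeneous_def by (metis Diff_iff singletonD)

lemma graph_symp: "graph V E \<Longrightarrow> symp E"
  unfolding graph_def symp_def by blast

lemma refines_subset_part:
  assumes "refines V P Q" "X \<in> P" "Y \<in> Q" "X \<inter> Y \<noteq> {}"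
  shows "X \<subseteq> Y"
proof -
  obtain Y' where Y': "Y' \<in> Q" "X \<subseteq> Y'"
    using assms(1,2) unfolding refines_def by blast
  have "disjoint Q"
    using assms(1) unfolding refines_def by (blast dest: partition_onD2)
  then have "Y' = Y"
    using disjointD[of Q Y' Y] Y' assms(3,4) by blast
  then show ?thesis
    using Y'(2) by simp
qed

lemma merge_sequence_partition_on:
  "merge_sequence V E m P R \<Longrightarrow> i \<in> {1..m} \<Longrightarrow> partition_on V (P i)"
  by (simp add: merge_sequence_def)

lemma merge_sequence_part_Union:
  "merge_sequence V E m P R \<Longrightarrow> i \<in> {2..m} \<Longrightarrow> A \<in> P i \<Longrightarrow> \<exists>S\<subseteq>P (i - 1). A = \<Union>S"
  by (simp add: merge_sequence_def)

lemma merge_sequence_resolved_step: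
  "merge_sequence V E m P R \<Longrightarrow> i \<in> {2..m} \<Longrightarrow> R (i - 1) \<subseteq> R i"
  by (simp add: merge_sequence_def)

lemma merge_sequence_resolved_subset_vpairs:
  "merge_sequence V E m P R \<Longrightarrow> i \<in> {1..m} \<Longrightarrow> R i \<subseteq> vpairs V"
  by (simp add: merge_sequence_def)

lemma merge_sequence_homogeneous:
  assumes "merge_sequence V E m P R" "i \<in> {1..m}" "A \<in> P i" "B \<in> P i"
  shows "homogeneous E (R i) A B"
proof -
  have "\<forall>i\<in>{1..m}. \<forall>A\<in>P i. \<forall>B\<in>P i. homogeneous E (R i) A B"
    using assms(1) unfolding merge_sequence_def homogeneous_def by (elim conjE) assumption
  then show ?thesis
    using assms(2-4) by blast
qed

lemma merge_sequence_shrink_resolved: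
  assumes ms: "merge_sequence V E m P R"
    and "\<And>i. i \<in> {1..m} \<Longrightarrow> R' i \<subseteq> R i"
    and "\<And>i. i \<in> {2..m} \<Longrightarrow> R' (i - 1) \<subseteq> R' i"
    and "\<And>i A B. i \<in> {1..m} \<Longrightarrow> A \<in> P i \<Longrightarrow> B \<in> P i \<Longrightarrow> homogeneous E (R' i) A B"
  shows "merge_sequence V E m P R'"
proof -
  have "\<forall>i\<in>{1..m}. R' i \<subseteq> vpairs V"
    using assms(2) merge_sequence_resolved_subset_vpairs[OF ms] by blast
  moreover have "\<forall>i\<in>{2..m}. R' (i - 1) \<subseteq> R' i"
    using assms(3) by blast
  moreover have "\<forall>i\<in>{1..m}. \<forall>A\<in>P i. \<forall>B\<in>P i. homogeneous E (R' i) A B"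
    using assms(4) by blast
  ultimately show ?thesis
    using ms unfolding merge_sequence_def homogeneous_def by (elim conjE) (intro conjI; assumption)
qed

lemma merge_sequence_resolved_mono:
  assumes ms: "merge_sequence V E m P R" and "1 \<le> k" "k \<le> l" "l \<le> m"
  shows "R k \<subseteq> R l"
  using \<open>k \<le> l\<close> \<open>l \<le> m\<close>
proof (induction l rule: dec_induct)
  case base
  then show ?case by simp
next
  case (step n)
  then have "R n \<subseteq> R (Suc n)"
    using merge_sequence_resolved_step[OF ms, of "Suc n"] \<open>1 \<le> k\<close> by simp
  with step show ?case by simp
qed

lemma merge_sequence_refines_step:
  assumes ms: "merge_sequence V E m P R" and n: "n \<in> {2..m}"
  shows "refines V (P (n - 1)) (P n)"
proof -
  have fine: "partition_on V (P (n - 1))" and coarse: "partition_on V (P n)"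
    using n merge_sequence_partition_on[OF ms, of "n - 1"] merge_sequence_partition_on[OF ms, of n]
    by fastforce+
  have "\<exists>B\<in>P n. A \<subseteq> B" if A: "A \<in> P (n - 1)" for A
  proof -
    obtain a where a: "a \<in> A"
      using A partition_onD3[OF fine] by fastforce
    then have "a \<in> V"
      using A partition_onD1[OF fine] by blast
    then obtain B where B: "B \<in> P n" "a \<in> B"
      using partition_onD1[OF coarse] by blast
    then obtain S where S: "S \<subseteq> P (n - 1)" "B = \<Union>S"
      using merge_sequence_part_Union[OF ms n] by blast
    then obtain C where "C \<in> S" "a \<in> C"
      using B(2) by blast
    then have "C = A"
      using S(1) A a disjointD[OF partition_onD2[OF fine]] by blast
    then show ?thesis
      using B(1) S(2) \<open>C \<in> S\<close> by blast
  qed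
  then show ?thesis
    unfolding refines_def using fine coarse by blast
qed

lemma merge_sequence_refines:
  assumes ms: "merge_sequence V E m P R" and "1 \<le> i" "i \<le> k" "k \<le> m"
  shows "refines V (P i) (P k)"
  using \<open>i \<le> k\<close> \<open>k \<le> m\<close>
proof (induction k rule: dec_induct)
  case base
  then show ?case
    using merge_sequence_partition_on[OF ms] \<open>1 \<le> i\<close> by (simp add: refines_refl)
next
  case (step n)
  then show ?case
    using merge_sequence_refines_step[OF ms, of "Suc n"] \<open>1 \<le> i\<close> refines_trans by fastforce
qed

lemma merge_sequence_unresolve:
  assumes ms: "merge_sequence V E m P R" and "symp E"
    and i: "i \<in> {1..m}" and X: "X \<in> P i" and Y: "Y \<in> P i"
    and x1: "x1 \<in> X" and x2: "x2 \<in> X" and y1: "y1 \<in> Y" and y2: "y2 \<in> Y"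
    and "x1 \<noteq> y1" "x2 \<noteq> y2" and "{x1, y1} \<notin> R i" "{x2, y2} \<notin> R i"
  shows "merge_sequence V E m P (\<lambda>k. if {x2, y2} \<in> R k then R k else R k - {{x1, y1}})"
    (is "merge_sequence V E m P ?R'")
proof (rule merge_sequence_shrink_resolved[OF ms])
  show "?R' k \<subseteq> R k" for k
    by auto
  show "?R' (k - 1) \<subseteq> ?R' k" if "k \<in> {2..m}" for k
    using merge_sequence_resolved_step[OF ms that] by auto
  fix k A B assume k: "k \<in> {1..m}" and A: "A \<in> P k" and B: "B \<in> P k"
  have hom: "homogeneous E (R k) A B"
    using merge_sequence_homogeneous[OF ms k A B] .
  show "homogeneous E (?R' k) A B"
  proof (cases "{x2, y2} \<notin> R k \<and> {x1, y1} \<in> R k")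
    case False
    then have "?R' k = R k"
      by auto
    then show ?thesis
      using hom by simp
  next
    case True
    have "i \<le> k"
    proof (rule ccontr)
      assume "\<not> i \<le> k"
      then have "R k \<subseteq> R i"
        using merge_sequence_resolved_mono[OF ms, of k i] i k by simp
      then show False
        using True \<open>{x1, y1} \<notin> R i\<close> by blast
    qed
    then have ref: "refines V (P i) (P k)"
      using merge_sequence_refines[OF ms, of i k] i k by simp
    have E_eq: "E x1 y1 = E x2 y2"
      by (rule homogeneous_unresolved_eq[OF merge_sequence_homogeneous[OF ms i X Y]]) fact+
    have "homogeneous E (R k - {{x1, y1}}) A B"
    proof (rule homogeneous_Diff_singleton[OF hom])
      fix a b assume a: "a \<in> A" and b: "b \<in> B" and "a \<noteq> b" and "{a, b} = {x1, y1}"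
      then consider "a = x1" "b = y1" | "a = y1" "b = x1"
        by (auto simp: doubleton_eq_iff)
      then show "\<exists>a'\<in>A. \<exists>b'\<in>B. a' \<noteq> b' \<and> {a', b'} \<notin> R k \<and> E a' b' = E a b"
      proof cases
        case 1
        have "X \<subseteq> A"
          by (rule refines_subset_part[OF ref X A]) (use 1 a x1 in blast)
        moreover have "Y \<subseteq> B"
          by (rule refines_subset_part[OF ref Y B]) (use 1 b y1 in blast)
        ultimately have "x2 \<in> A" "y2 \<in> B"
          using x2 y2 by blast+
        moreover have "x2 \<noteq> y2 \<and> {x2, y2} \<notin> R k \<and> E x2 y2 = E a b"
          using 1 True E_eq \<open>x2 \<noteq> y2\<close> by simp
        ultimately show ?thesis
          by blast
      next
        case 2
        have "Y \<subseteq> A"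
          by (rule refines_subset_part[OF ref Y A]) (use 2 a y1 in blast)
        moreover have "X \<subseteq> B"
          by (rule refines_subset_part[OF ref X B]) (use 2 b x1 in blast)
        ultimately have "y2 \<in> A" "x2 \<in> B"
          using x2 y2 by blast+
        moreover have "E y2 x2 = E y1 x1"
          using E_eq \<open>symp E\<close> unfolding symp_def by blast
        then have "y2 \<noteq> x2 \<and> {y2, x2} \<notin> R k \<and> E y2 x2 = E a b"
          using 2 True \<open>x2 \<noteq> y2\<close> by (simp add: insert_commute)
        ultimately show ?thesis
          by blast
      qed
    qed
    then show ?thesis
      using True by simp
  qed
qed

lemma minimal_merge_sequence_resolved_together:
  assumes mm: "minimal_merge_sequence V E m P R" and "symp E"
    and "i \<in> {1..m}" "X \<in> P i" "Y \<in> P i"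
    and "x1 \<in> X" "x2 \<in> X" "y1 \<in> Y" "y2 \<in> Y" "x1 \<noteq> y1" "x2 \<noteq> y2"
    and "{x1, y1} \<notin> R i" "{x2, y2} \<notin> R i"
    and j: "j \<in> {1..m}" and "{x1, y1} \<in> R j"
  shows "{x2, y2} \<in> R j"
proof (rule ccontr)
  assume "{x2, y2} \<notin> R j"
  have ms: "merge_sequence V E m P R"
    using mm unfolding minimal_merge_sequence_def by blast
  define R' where "R' k = (if {x2, y2} \<in> R k then R k else R k - {{x1, y1}})" for k
  have "merge_sequence V E m P R'"
    unfolding R'_def using merge_sequence_unresolve[OF ms assms(2-13)] .
  moreover have "\<forall>k\<in>{1..m}. R' k \<subseteq> R k"
    unfolding R'_def by auto
  moreover have "R' j \<noteq> R j"
    unfolding R'_def using \<open>{x1, y1} \<in> R j\<close> \<open>{x2, y2} \<notin> R j\<close> by auto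
  ultimately show False
    using mm j unfolding minimal_merge_sequence_def by blast
qed

theorem lemma2p1:
  fixes V :: "'a set" and E :: "'a \<Rightarrow> 'a \<Rightarrow> bool"
    and m :: nat and P R :: "nat \<Rightarrow> 'a set set"
  assumes "finite V" and "graph V E"
    and "minimal_merge_sequence V E m P R"
    and "i \<in> {1..m}" and "X \<in> P i" and "Y \<in> P i"
    and "x1 \<in> X" and "x2 \<in> X" and "y1 \<in> Y" and "y2 \<in> Y"
    and "x1 \<noteq> y1" and "x2 \<noteq> y2"
    and "{x1, y1} \<notin> R i" and "{x2, y2} \<notin> R i"
  shows "\<forall>j\<in>{1..m}. ({x1, y1} \<in> R j \<longleftrightarrow> {x2, y2} \<in> R j)"
proof -
  have "symp E"
    using assms(2) by (rule graph_symp)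
  note resolved_together = minimal_merge_sequence_resolved_together[OF assms(3) this]
  show ?thesis
    using resolved_together[OF assms(4-14)]
      resolved_together[OF assms(4-6) assms(8,7,10,9,12,11,14,13)]
    by blast
qed

end
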